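(* Let $Q\ge1$, $0<s<Q$, let $(X,d_X,\mu)$ be a proper, locally $Q$-homogeneous metric measure space supporting a local $Q$-Poincaré inequality, and let $\pi\colon X\to W$ be a locally David–Semmes $s$-regular map onto a proper metric space $W$. Let $Y$ be a metric space, $p>Q$, $f\colon X\to Y$ continuous with an upper gradient in $L^p_{\mathrm{loc}}(X)$, and $\alpha\in(s,\frac{ps}{p-Q+s}]$. Then for every compact $K\subseteq X$, the set $$E_\alpha=\{a\in W:\mathcal{H}^\alpha(f(\pi^{-1}(a)\cap K))>0\}$$ is a countable union of compact sets.
   Context: Metric measure space: metric space with Borel measure positive and finite on nonempty open sets; proper: closed balls compact. Locally $Q$-homogeneous: for every compact $K$ there are $R>0$, $C\ge1$ with $\mu(B(x,r_2))/r_2^Q\le C\mu(B(x,r_1))/r_1^Q$ for $x\in K$, $0<r_1\le r_2<R$. Upper gradient of continuous $f$: Borel $g\ge0$ with $d_Y(f(\gamma(0)),f(\gamma(1)))\le\int_\gamma g\,ds$ for all rectifiable $\gamma$. Local $Q$-Poincaré inequality: for each compact $K$ there are $C,\sigma\ge1$, $R>0$ such that for every continuous $u\colon X\to\mathbb{R}$ with upper gradient $g$ and every ball $B$ centered in $K$ of radius $<R$, $\frac{1}{\mu(B)}\int_B|u-u_B|d\mu\le C\operatorname{diam}B(\frac{1}{\mu(\sigma B)}\int_{\sigma B}g^Q d\mu)^{1/Q}$. A surjection $\pi\colon X\to W$ between proper metric spaces is locally David–Semmes $s$-regular if for every compact $K\subseteq X$, $\pi|_K$ is Lipschitz and there are $C\ge1$,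 $r_0>0$ such that for every ball $B\subseteq W$ of radius $r<r_0$, $\pi^{-1}(B)\cap K$ can be covered by at most $Cr^{-s}$ balls in $X$ of radius $Cr$. *)

theory Defs
  imports "HOL-Analysis.Analysis"
begin

definition enn_powr :: "ennreal \<Rightarrow> real \<Rightarrow> ennreal" where
  "enn_powr x q = (if x = \<infinity> then \<infinity> else ennreal (enn2real x powr q))"

definition proper_space :: "'a::metric_space itself \<Rightarrow> bool" where
  "proper_space _ \<longleftrightarrow> (\<forall>(x::'a) r. compact (cball x r))"

definition curve_length :: "(real \<Rightarrow> 'a::metric_space) \<Rightarrow> real \<Rightarrow> real \<Rightarrow> ennreal" where
  "curve_length \<gamma> a b =
     (SUP ts \<in> {ts. sorted ts \<and> set ts \<subseteq> {a..b}}.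
        ennreal (\<Sum>i<length ts - 1. dist (\<gamma> (ts ! i)) (\<gamma> (ts ! (i + 1)))))"

definition rectifiable_curve :: "(real \<Rightarrow> 'a::metric_space) \<Rightarrow> bool" where
  "rectifiable_curve \<gamma> \<longleftrightarrow> continuous_on {0..1} \<gamma> \<and> curve_length \<gamma> 0 1 < \<infinity>"

definition arclength_param :: "(real \<Rightarrow> 'a::metric_space) \<Rightarrow> real \<Rightarrow> 'a" where
  "arclength_param \<gamma> s = \<gamma> (SOME t. t \<in> {0..1} \<and> enn2real (curve_length \<gamma> 0 t) = s)"

definition line_integral :: "('a::metric_space \<Rightarrow> ennreal) \<Rightarrow> (real \<Rightarrow> 'a) \<Rightarrow> ennreal" where
  "line_integral g \<gamma> =
     (\<integral>\<^sup>+ s. g (arclength_param \<gamma> s) * indicator {0..enn2real (curve_length \<gamma> 0 1)} s \<partial>lborel)"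

definition upper_gradient :: "('a::metric_space \<Rightarrow> 'b::metric_space) \<Rightarrow> ('a \<Rightarrow> ennreal) \<Rightarrow> bool" where
  "upper_gradient f g \<longleftrightarrow> g \<in> borel_measurable borel \<and>
     (\<forall>\<gamma>. rectifiable_curve \<gamma> \<longrightarrow> ennreal (dist (f (\<gamma> 0)) (f (\<gamma> 1))) \<le> line_integral g \<gamma>)"

definition Lp_loc :: "'a::metric_space measure \<Rightarrow> real \<Rightarrow> ('a \<Rightarrow> ennreal) \<Rightarrow> bool" where
  "Lp_loc \<mu> p g \<longleftrightarrow> g \<in> borel_measurable \<mu> \<and>
     (\<forall>K. compact K \<longrightarrow> (\<integral>\<^sup>+ x. enn_powr (g x) p * indicator K x \<partial>\<mu>) < \<infinity>)"

definition metric_measure_space :: "'a::metric_space measure \<Rightarrow> bool" where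
  "metric_measure_space \<mu> \<longleftrightarrow> sets \<mu> = sets borel \<and>
     (\<forall>(x::'a) r. 0 < r \<longrightarrow> 0 < emeasure \<mu> (ball x r) \<and> emeasure \<mu> (ball x r) < \<infinity>)"

definition locally_homogeneous :: "'a::metric_space measure \<Rightarrow> real \<Rightarrow> bool" where
  "locally_homogeneous \<mu> Q \<longleftrightarrow>
     (\<forall>K. compact K \<longrightarrow> (\<exists>R>0. \<exists>C\<ge>1. \<forall>x\<in>K. \<forall>r1 r2. 0 < r1 \<and> r1 \<le> r2 \<and> r2 < R \<longrightarrow>
        measure \<mu> (ball x r2) / r2 powr Q \<le> C * (measure \<mu> (ball x r1) / r1 powr Q)))"

definition local_poincare :: "'a::metric_space measure \<Rightarrow> real \<Rightarrow> bool" where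
  "local_poincare \<mu> Q \<longleftrightarrow>
     (\<forall>K. compact K \<longrightarrow> (\<exists>C\<ge>1. \<exists>\<sigma>\<ge>1. \<exists>R>0.
        \<forall>(u::'a \<Rightarrow> real) g. continuous_on UNIV u \<and> upper_gradient u g \<longrightarrow>
        (\<forall>x\<in>K. \<forall>r. 0 < r \<and> r < R \<longrightarrow>
          (let B = ball x r; uB = (\<integral>y\<in>B. u y \<partial>\<mu>) / measure \<mu> B;
               G = (\<integral>\<^sup>+ y. enn_powr (g y) Q * indicator (ball x (\<sigma> * r)) y \<partial>\<mu>)
           in G < \<infinity> \<longrightarrow>
              (\<integral>y\<in>B. \<bar>u y - uB\<bar> \<partial>\<mu>) / measure \<mu> B
                \<le> C * diameter B * (enn2real G / measure \<mu> (ball x (\<sigma> * r))) powr (1 / Q)))))"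

definition locally_DS_regular :: "('a::metric_space \<Rightarrow> 'b::metric_space) \<Rightarrow> real \<Rightarrow> bool" where
  "locally_DS_regular \<pi> s \<longleftrightarrow> surj \<pi> \<and>
     (\<forall>K. compact K \<longrightarrow>
        (\<exists>L. L-lipschitz_on K \<pi>) \<and>
        (\<exists>C\<ge>1. \<exists>r0>0. \<forall>w r. 0 < r \<and> r < r0 \<longrightarrow>
           (\<exists>F. finite F \<and> real (card F) \<le> C * r powr (-s) \<and>
                \<pi> -` ball w r \<inter> K \<subseteq> (\<Union>x\<in>F. ball x (C * r)))))"

definition hausdorff_content :: "real \<Rightarrow> real \<Rightarrow> 'a::metric_space set \<Rightarrow> ennreal" where
  "hausdorff_content \<alpha> \<delta> A =
     (INF U \<in> {U :: nat \<Rightarrow> 'a set. A \<subseteq> \<Union>(range U) \<and> (\<forall>i. bounded (U i) \<and> diameter (U i) \<le> \<delta>)}.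
        (\<Sum>i. ennreal (diameter (U i) powr \<alpha>)))"

definition hausdorff_measure :: "real \<Rightarrow> 'a::metric_space set \<Rightarrow> ennreal" where
  "hausdorff_measure \<alpha> A = (SUP \<delta> \<in> {0<..}. hausdorff_content \<alpha> \<delta> A)"

end

theory Submission
  imports Defs
begin

(* The map a \<mapsto> H^\<alpha>_\<delta>(f(\<pi>\<^sup>-\<^sup>1(a) \<inter> K)) is upper semicontinuous up to a change of scale:
   a cover of the fibre image over a can be thickened into an open cover of almost the same
   \<alpha>-mass and a slightly larger scale, and by compactness of K this open cover still covers the
   fibre images over all points near a.  Since positivity of H^\<alpha> is detected by the content at
   any fixed scale, E_\<alpha> is the union of the closures of the superlevel sets
   {a. H^\<alpha>_2(\<dots>) \<ge> 1/(n+1)}, each compact because it lies in the compact set \<pi>(K). *)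

lemma diameter_le_dist:
  fixes S :: "'a::metric_space set"
  assumes "S \<noteq> {} \<or> 0 \<le> d" and "\<And>x y. x \<in> S \<Longrightarrow> y \<in> S \<Longrightarrow> dist x y \<le> d"
  shows "diameter S \<le> d"
  using assms by (auto simp: diameter_def intro: cSUP_least)

lemma bounded_diameter_thickening:
  fixes U :: "'a::metric_space set"
  assumes "bounded U" and "0 < \<eta>"
  shows "bounded (\<Union>y\<in>U. ball y \<eta>)" and "diameter (\<Union>y\<in>U. ball y \<eta>) \<le> diameter U + 2 * \<eta>"
proof -
  have dist_le: "dist x y \<le> diameter U + 2 * \<eta>"
    if "x \<in> (\<Union>y\<in>U. ball y \<eta>)" and "y \<in> (\<Union>y\<in>U. ball y \<eta>)" for x y
  proof -
    from that obtain u v where "u \<in> U" "v \<in> U" "dist u x < \<eta>" "dist v y < \<eta>"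
      by auto
    moreover have "dist u v \<le> diameter U"
      using \<open>bounded U\<close> \<open>u \<in> U\<close> \<open>v \<in> U\<close> by (rule diameter_bounded_bound)
    ultimately show ?thesis
      using dist_triangle[of x y u] dist_triangle[of u y v] by (simp add: dist_commute)
  qed
  then show "bounded (\<Union>y\<in>U. ball y \<eta>)"
    unfolding bounded_two_points by blast
  show "diameter (\<Union>y\<in>U. ball y \<eta>) \<le> diameter U + 2 * \<eta>"
    using dist_le diameter_ge_0[OF \<open>bounded U\<close>] \<open>0 < \<eta>\<close>
    by (intro diameter_le_dist) auto
qed

lemma eventually_powr_add_le:
  fixes d \<alpha> \<epsilon> :: real
  assumes "0 \<le> d" and "0 < \<alpha>" and "0 < \<epsilon>"
  shows "\<forall>\<^sub>F t in at_right 0. (d + t) powr \<alpha> \<le> d powr \<alpha> + \<epsilon>"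
proof -
  have "((\<lambda>t. (d + t) powr \<alpha>) \<longlongrightarrow> (d + 0) powr \<alpha>) (at_right 0)"
  proof (rule tendsto_powr2)
    show "((\<lambda>t. d + t) \<longlongrightarrow> d + 0) (at_right 0)"
      by (intro tendsto_intros)
    show "\<forall>\<^sub>F t in at_right 0. 0 \<le> d + t"
      using \<open>0 \<le> d\<close> by (auto simp: eventually_at_right_field intro!: exI[of _ 1])
  qed (use \<open>0 < \<alpha>\<close> in auto)
  then have "\<forall>\<^sub>F t in at_right 0. dist ((d + t) powr \<alpha>) (d powr \<alpha>) < \<epsilon>"
    using \<open>0 < \<epsilon>\<close> by (auto dest: tendstoD)
  then show ?thesis
    by eventually_elim (auto simp: dist_real_def)
qed

lemma hausdorff_content_empty:
  assumes "0 \<le> \<delta>"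
  shows "hausdorff_content \<alpha> \<delta> {} = 0"
proof -
  have "hausdorff_content \<alpha> \<delta> ({} :: 'a::metric_space set) \<le> 0"
    unfolding hausdorff_content_def using assms by (intro INF_lower2[of "\<lambda>_. {}"]) auto
  then show ?thesis
    by simp
qed

lemma open_cover_enlargement:
  fixes U :: "nat \<Rightarrow> 'a::metric_space set"
  assumes "0 < \<alpha>" and "\<delta> < \<delta>'" and "0 < e"
    and U: "\<And>i. bounded (U i)" "\<And>i. diameter (U i) \<le> \<delta>"
  obtains V where "\<And>i. open (V i)" "\<And>i. U i \<subseteq> V i" "\<And>i. bounded (V i)" "\<And>i. diameter (V i) \<le> \<delta>'"
    and "(\<Sum>i. ennreal (diameter (V i) powr \<alpha>)) \<le> (\<Sum>i. ennreal (diameter (U i) powr \<alpha>)) + ennreal e"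
proof -
  define e' where "e' i = e * (1/2) ^ Suc i" for i
  have "\<exists>t>0. t \<le> \<delta>' - \<delta> \<and> (diameter (U i) + t) powr \<alpha> \<le> diameter (U i) powr \<alpha> + e' i" for i
  proof -
    have "\<forall>\<^sub>F t in at_right 0. t \<le> \<delta>' - \<delta>"
      using \<open>\<delta> < \<delta>'\<close> by (auto simp: eventually_at_right_field intro!: exI[of _ "\<delta>' - \<delta>"])
    moreover have "\<forall>\<^sub>F t in at_right 0. (diameter (U i) + t) powr \<alpha> \<le> diameter (U i) powr \<alpha> + e' i"
      using \<open>0 < e\<close> \<open>0 < \<alpha>\<close> diameter_ge_0[OF U(1)]
      by (intro eventually_powr_add_le) (auto simp: e'_def)
    moreover note eventually_at_right_less[of "0::real"]
    ultimately have "\<forall>\<^sub>F t in at_right 0. 0 < t \<and> t \<le> \<delta>' - \<delta> \<and>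
        (diameter (U i) + t) powr \<alpha> \<le> diameter (U i) powr \<alpha> + e' i"
      by eventually_elim auto
    from eventually_happens'[OF trivial_limit_at_right_real this] show ?thesis
      by blast
  qed
  then obtain t where t: "\<And>i. 0 < t i" "\<And>i. t i \<le> \<delta>' - \<delta>"
    "\<And>i. (diameter (U i) + t i) powr \<alpha> \<le> diameter (U i) powr \<alpha> + e' i"
    by metis
  define V where "V i = (\<Union>y\<in>U i. ball y (t i / 2))" for i
  have V: "bounded (V i)" "diameter (V i) \<le> diameter (U i) + t i" for i
    using bounded_diameter_thickening[OF U(1), of "t i / 2" i] t(1)[of i] by (auto simp: V_def)
  have "ennreal (diameter (V i) powr \<alpha>) \<le> ennreal (diameter (U i) powr \<alpha>) + ennreal (e' i)" for i
  proof -
    have "diameter (V i) powr \<alpha> \<le> (diameter (U i) + t i) powr \<alpha>"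
      using V diameter_ge_0[OF V(1)] \<open>0 < \<alpha>\<close> by (intro powr_mono2) auto
    also have "\<dots> \<le> diameter (U i) powr \<alpha> + e' i"
      by (rule t(3))
    finally show ?thesis
      using \<open>0 < e\<close> by (simp add: e'_def flip: ennreal_plus)
  qed
  then have "(\<Sum>i. ennreal (diameter (V i) powr \<alpha>)) \<le> (\<Sum>i. ennreal (diameter (U i) powr \<alpha>) + ennreal (e' i))"
    by (intro suminf_le) auto
  also have "\<dots> = (\<Sum>i. ennreal (diameter (U i) powr \<alpha>)) + (\<Sum>i. ennreal (e' i))"
    by (rule suminf_add[symmetric]) auto
  also have "(\<Sum>i. ennreal (e' i)) = ennreal (\<Sum>i. e' i)"
    using \<open>0 < e\<close> unfolding e'_def
    by (intro suminf_ennreal2) (auto intro!: summable_mult sums_summable[OF power_half_series])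
  also have "(\<Sum>i. e' i) = e"
    using sums_unique[OF sums_mult[OF power_half_series, of e]] by (simp add: e'_def)
  finally have sum_le: "(\<Sum>i. ennreal (diameter (V i) powr \<alpha>)) \<le> (\<Sum>i. ennreal (diameter (U i) powr \<alpha>)) + ennreal e" .
  show ?thesis
  proof (rule that)
    show "open (V i)" for i
      by (auto simp: V_def)
    show "U i \<subseteq> V i" for i
      using t(1)[of i] by (force simp: V_def)
    show "diameter (V i) \<le> \<delta>'" for i
      using V(2)[of i] t(2)[of i] U(2)[of i] by linarith
  qed (use V sum_le in auto)
qed

lemma open_Collect_fibre_image_subset:
  fixes \<pi> :: "'x::metric_space \<Rightarrow> 'w::metric_space" and f :: "'x \<Rightarrow> 'y::metric_space"
  assumes "compact K" and "continuous_on K \<pi>" and "continuous_on K f" and "open G"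
  shows "open {b. f ` (\<pi> -` {b} \<inter> K) \<subseteq> G}"
proof -
  have "closed (K \<inter> f -` (- G))"
    using \<open>continuous_on K f\<close> compact_imp_closed[OF \<open>compact K\<close>] \<open>open G\<close>
    by (intro continuous_closed_preimage) auto
  then have "compact (K \<inter> f -` (- G))"
    using compact_Int_closed[OF \<open>compact K\<close>] by (metis Int_left_absorb)
  then have "compact (\<pi> ` (K \<inter> f -` (- G)))"
    by (intro compact_continuous_image continuous_on_subset[OF \<open>continuous_on K \<pi>\<close>]) auto
  moreover have "{b. f ` (\<pi> -` {b} \<inter> K) \<subseteq> G} = - \<pi> ` (K \<inter> f -` (- G))"
    by auto
  ultimately show ?thesis
    by (simp add: compact_imp_closed open_Compl)
qed

lemma closure_hausdorff_content_fibre_image_superlevel: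
  fixes \<pi> :: "'x::metric_space \<Rightarrow> 'w::metric_space" and f :: "'x \<Rightarrow> 'y::metric_space"
  assumes "compact K" and "continuous_on K \<pi>" and "continuous_on K f"
    and "0 < \<alpha>" and "\<delta> < \<delta>'"
    and a: "a \<in> closure {b. c \<le> hausdorff_content \<alpha> \<delta>' (f ` (\<pi> -` {b} \<inter> K))}"
  shows "c \<le> hausdorff_content \<alpha> \<delta> (f ` (\<pi> -` {a} \<inter> K))"
  unfolding hausdorff_content_def
proof (rule INF_greatest, rule ennreal_le_epsilon)
  fix U :: "nat \<Rightarrow> 'y set" and e :: real
  assume "U \<in> {U. f ` (\<pi> -` {a} \<inter> K) \<subseteq> \<Union> (range U) \<and> (\<forall>i. bounded (U i) \<and> diameter (U i) \<le> \<delta>)}"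
    and "0 < e"
  then have cover: "f ` (\<pi> -` {a} \<inter> K) \<subseteq> \<Union> (range U)"
    and U: "\<And>i. bounded (U i)" "\<And>i. diameter (U i) \<le> \<delta>"
    by auto
  obtain V where V: "\<And>i. open (V i)" "\<And>i. U i \<subseteq> V i" "\<And>i. bounded (V i)" "\<And>i. diameter (V i) \<le> \<delta>'"
    and sum_le: "(\<Sum>i. ennreal (diameter (V i) powr \<alpha>)) \<le> (\<Sum>i. ennreal (diameter (U i) powr \<alpha>)) + ennreal e"
    using open_cover_enlargement[where U = U, OF \<open>0 < \<alpha>\<close> \<open>\<delta> < \<delta>'\<close> \<open>0 < e\<close> U] by blast
  define N where "N = {b. f ` (\<pi> -` {b} \<inter> K) \<subseteq> \<Union> (range V)}"
  have "open N"
    unfolding N_def using assms V(1) by (intro open_Collect_fibre_image_subset) auto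
  moreover have "a \<in> N"
    using cover V(2) unfolding N_def by blast
  ultimately have "N \<inter> {b. c \<le> hausdorff_content \<alpha> \<delta>' (f ` (\<pi> -` {b} \<inter> K))} \<noteq> {}"
    using a open_Int_closure_eq_empty by (metis IntI empty_iff)
  then obtain b where b: "b \<in> N" "c \<le> hausdorff_content \<alpha> \<delta>' (f ` (\<pi> -` {b} \<inter> K))"
    by blast
  note b(2)
  also have "hausdorff_content \<alpha> \<delta>' (f ` (\<pi> -` {b} \<inter> K)) \<le> (\<Sum>i. ennreal (diameter (V i) powr \<alpha>))"
    unfolding hausdorff_content_def using b(1) V(3,4) by (intro INF_lower) (auto simp: N_def)
  finally show "c \<le> (\<Sum>i. ennreal (diameter (U i) powr \<alpha>)) + ennreal e"
    using sum_le by (rule order_trans)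
qed

lemma hausdorff_content_eq_0_rescale:
  fixes A :: "'a::metric_space set"
  assumes "0 < \<alpha>" and "0 < \<delta>'" and "hausdorff_content \<alpha> \<delta> A = 0"
  shows "hausdorff_content \<alpha> \<delta>' A = 0"
proof -
  have "hausdorff_content \<alpha> \<delta>' A \<le> 0 + ennreal e" if "0 < e" for e
  proof -
    define \<epsilon> where "\<epsilon> = min e (\<delta>' powr \<alpha>)"
    have \<epsilon>: "0 < \<epsilon>" "\<epsilon> \<le> e" "\<epsilon> \<le> \<delta>' powr \<alpha>"
      using that assms by (auto simp: \<epsilon>_def)
    then have "hausdorff_content \<alpha> \<delta> A < ennreal \<epsilon>"
      using assms by simp
    then obtain U where U: "A \<subseteq> \<Union>(range U)" "\<And>i. bounded (U i)"
      and sum_less: "(\<Sum>i. ennreal (diameter (U i) powr \<alpha>)) < ennreal \<epsilon>"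
      unfolding hausdorff_content_def INF_less_iff by auto
    \<comment> \<open>a set of diameter > \<delta>' alone would have mass \<ge> \<delta>'^\<alpha> \<ge> \<epsilon>\<close>
    have "diameter (U i) \<le> \<delta>'" for i
    proof (rule ccontr)
      assume "\<not> diameter (U i) \<le> \<delta>'"
      then have "\<delta>' powr \<alpha> \<le> diameter (U i) powr \<alpha>"
        using assms by (intro powr_mono2) auto
      moreover have "diameter (U i) powr \<alpha> < \<epsilon>"
        using ennreal_suminf_lessD[OF sum_less, of i] \<epsilon> by (simp add: ennreal_less_iff)
      ultimately show False
        using \<epsilon> by linarith
    qed
    then have "hausdorff_content \<alpha> \<delta>' A \<le> (\<Sum>i. ennreal (diameter (U i) powr \<alpha>))"
      unfolding hausdorff_content_def using U by (intro INF_lower) auto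
    also have "\<dots> \<le> ennreal \<epsilon>"
      using sum_less by (rule less_imp_le)
    also have "\<dots> \<le> ennreal e"
      using \<epsilon>(2) by (rule ennreal_leI)
    finally show ?thesis
      by simp
  qed
  then have "hausdorff_content \<alpha> \<delta>' A \<le> 0"
    by (rule ennreal_le_epsilon)
  then show ?thesis
    by simp
qed

lemma hausdorff_measure_pos_iff_content_pos:
  fixes A :: "'a::metric_space set"
  assumes "0 < \<alpha>" and "0 < \<delta>"
  shows "0 < hausdorff_measure \<alpha> A \<longleftrightarrow> 0 < hausdorff_content \<alpha> \<delta> A"
proof
  assume "0 < hausdorff_measure \<alpha> A"
  then obtain \<delta>' where "0 < \<delta>'" "0 < hausdorff_content \<alpha> \<delta>' A"
    unfolding hausdorff_measure_def less_SUP_iff by auto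
  then show "0 < hausdorff_content \<alpha> \<delta> A"
    using hausdorff_content_eq_0_rescale[OF \<open>0 < \<alpha>\<close> \<open>0 < \<delta>'\<close>] by (auto simp: zero_less_iff_neq_zero)
next
  assume "0 < hausdorff_content \<alpha> \<delta> A"
  also have "hausdorff_content \<alpha> \<delta> A \<le> hausdorff_measure \<alpha> A"
    unfolding hausdorff_measure_def using assms by (intro SUP_upper) auto
  finally show "0 < hausdorff_measure \<alpha> A" .
qed

lemma ennreal_pos_ex_inverse_Suc_le:
  fixes x :: ennreal
  assumes "0 < x"
  shows "\<exists>n. ennreal (1 / real (Suc n)) \<le> x"
proof (cases x rule: ennreal_cases)
  case (real r)
  with assms have "0 < r"
    by (simp add: ennreal_less_iff)
  then obtain n where "inverse (real (Suc n)) < r"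
    using reals_Archimedean by blast
  with real show ?thesis
    by (intro exI[of _ n]) (simp add: ennreal_leI inverse_eq_divide)
qed simp

lemma locally_DS_regular_continuous_on:
  assumes "locally_DS_regular \<pi> s" and "compact K"
  shows "continuous_on K \<pi>"
proof -
  obtain L where "L-lipschitz_on K \<pi>"
    using assms unfolding locally_DS_regular_def by auto
  then show ?thesis
    by (rule lipschitz_on_continuous_on)
qed

lemma compact_closure_hausdorff_content_fibre_image_superlevel:
  fixes \<pi> :: "'x::metric_space \<Rightarrow> 'w::metric_space" and f :: "'x \<Rightarrow> 'y::metric_space"
  assumes "compact K" and "continuous_on K \<pi>" and "continuous_on K f"
    and "0 < \<alpha>" and "0 \<le> \<delta>" and "\<delta> < \<delta>'" and "0 < c"
  shows "compact (closure {b. c \<le> hausdorff_content \<alpha> \<delta>' (f ` (\<pi> -` {b} \<inter> K))})"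
    (is "compact ?C")
proof -
  have "a \<in> \<pi> ` K" if "a \<in> ?C" for a
  proof (rule ccontr)
    assume "a \<notin> \<pi> ` K"
    then have "\<pi> -` {a} \<inter> K = {}"
      by blast
    moreover have "c \<le> hausdorff_content \<alpha> \<delta> (f ` (\<pi> -` {a} \<inter> K))"
      using closure_hausdorff_content_fibre_image_superlevel[OF assms(1-4,6) that] .
    ultimately show False
      using \<open>0 \<le> \<delta>\<close> \<open>0 < c\<close> by (simp add: hausdorff_content_empty)
  qed
  then have "?C = \<pi> ` K \<inter> ?C"
    by blast
  also have "compact \<dots>"
    using \<open>compact K\<close> \<open>continuous_on K \<pi>\<close> by (intro compact_Int_closed compact_continuous_image) auto
  finally show ?thesis .
qed

lemma positive_hausdorff_measure_fibre_images_sigma_compact: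
  fixes \<pi> :: "'x::metric_space \<Rightarrow> 'w::metric_space" and f :: "'x \<Rightarrow> 'y::metric_space"
  assumes "compact K" and "continuous_on K \<pi>" and "continuous_on K f" and "0 < \<alpha>"
  shows "\<exists>C :: nat \<Rightarrow> 'w set. (\<forall>i. compact (C i)) \<and>
           {a. hausdorff_measure \<alpha> (f ` (\<pi> -` {a} \<inter> K)) > 0} = (\<Union>i. C i)"
proof -
  define H where "H \<delta> a = hausdorff_content \<alpha> \<delta> (f ` (\<pi> -` {a} \<inter> K))" for \<delta> a
  define C where "C n = closure {a. ennreal (1 / Suc n) \<le> H 2 a}" for n
  have H_pos_iff: "0 < H \<delta> a \<longleftrightarrow> 0 < hausdorff_measure \<alpha> (f ` (\<pi> -` {a} \<inter> K))"
    if "0 < \<delta>" for \<delta> a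
    unfolding H_def by (rule hausdorff_measure_pos_iff_content_pos[OF \<open>0 < \<alpha>\<close> that, symmetric])
  have "{a. 0 < H 2 a} \<subseteq> (\<Union>n. C n)"
  proof
    fix a assume "a \<in> {a. 0 < H 2 a}"
    then obtain n where "a \<in> {a. ennreal (1 / Suc n) \<le> H 2 a}"
      using ennreal_pos_ex_inverse_Suc_le by auto
    then show "a \<in> (\<Union>n. C n)"
      unfolding C_def by (meson UN_I UNIV_I closure_subset subsetD)
  qed
  moreover have "C n \<subseteq> {a. 0 < H 1 a}" for n
  proof -
    have "C n \<subseteq> {a. ennreal (1 / Suc n) \<le> H 1 a}"
      using closure_hausdorff_content_fibre_image_superlevel[OF assms(1-4), of 1 2]
      unfolding C_def H_def by auto
    moreover have "0 < ennreal (1 / Suc n)"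
      by simp
    ultimately show ?thesis
      by (blast intro: less_le_trans)
  qed
  moreover have "compact (C n)" for n
    unfolding C_def H_def
    by (rule compact_closure_hausdorff_content_fibre_image_superlevel[OF assms, where \<delta> = 1]) auto
  ultimately show ?thesis
    using H_pos_iff[of 1] H_pos_iff[of 2] by (intro exI[of _ C]) auto
qed

theorem lemma5p1:
  fixes \<mu> :: "'x::metric_space measure"
    and \<pi> :: "'x \<Rightarrow> 'w::metric_space"
    and f :: "'x \<Rightarrow> 'y::metric_space"
    and Q s p \<alpha> :: real
    and K :: "'x set"
  assumes "Q \<ge> 1" and "0 < s" and "s < Q"
    and "proper_space TYPE('x)"
    and "metric_measure_space \<mu>"
    and "locally_homogeneous \<mu> Q"
    and "local_poincare \<mu> Q"
    and "proper_space TYPE('w)"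
    and "locally_DS_regular \<pi> s"
    and "p > Q"
    and "continuous_on UNIV f"
    and "\<exists>g. upper_gradient f g \<and> Lp_loc \<mu> p g"
    and "s < \<alpha>" and "\<alpha> \<le> p * s / (p - Q + s)"
    and "compact K"
  shows "\<exists>C :: nat \<Rightarrow> 'w set. (\<forall>i. compact (C i)) \<and>
           {a. hausdorff_measure \<alpha> (f ` (\<pi> -` {a} \<inter> K)) > 0} = (\<Union>i. C i)"
proof (rule positive_hausdorff_measure_fibre_images_sigma_compact)
  show "continuous_on K \<pi>"
    using \<open>locally_DS_regular \<pi> s\<close> \<open>compact K\<close> by (rule locally_DS_regular_continuous_on)
  show "continuous_on K f"
    using \<open>continuous_on UNIV f\<close> by (rule continuous_on_subset) simp
  show "0 < \<alpha>"
    using \<open>0 < s\<close> \<open>s < \<alpha>\<close> by linarith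
qed fact

end
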